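(* Define $i:({}^{\star}\mathbb{R}_{\mathcal F})_F\to\mathbb{R}_{\mathcal F}^{\circ}$ by $i([x]_{\mathcal F})=[x]_o$ and $j:{}^{\star}\mathbb{R}_{\mathcal F}\to{}^{\star}\mathbb{R}$ by $j([x]_{\mathcal F})=[x]_{\mathcal U}$. Then $i$ and $j$ are well-defined, surjective ring homomorphisms (hence non-trivial), and order-preserving in the sense that $[x]_{\mathcal F}\le_{\mathcal F}[y]_{\mathcal F}$ implies $i([x]_{\mathcal F})\le_o i([y]_{\mathcal F})$ (when both sides are defined) and $j([x]_{\mathcal F})\le_{\mathcal U} j([y]_{\mathcal F})$.
   Context: $\mathcal F$ is the Fréchet filter of cofinite subsets of $\mathbb{N}$, $\mathcal U\supseteq\mathcal F$ is a nonprincipal ultrafilter on $\mathbb{N}$. Henle's ring ${}^{\star}\mathbb{R}_{\mathcal F}=\mathbb{R}^{\mathbb{N}}/\mathcal F$: classes $[x]_{\mathcal F}$ of real sequences identified when equal on a set in $\mathcal F$, pointwise operations, $[x]_{\mathcal F}\le_{\mathcal F}[y]_{\mathcal F}$ iff $\{n:x_n\le y_n\}\in\mathcal F$. The hyperreal field ${}^{\star}\mathbb{R}=\mathbb{R}^{\mathbb{N}}/\mathcal U$ analogously with $\mathcal U$ in place of $\mathcal F$. $({}^{\star}\mathbb{R}_{\mathcal F})_F$ denotes the subring of finite elements of ${}^{\star}\mathbb{R}_{\mathcal F}$, i.e. those $r$ with $-n\le r\le n$ for some $n\in\mathbb{N}$ (equivalently classes of eventually bounded sequences). With $\mathbb{R}^{\mathbb{N}}_B$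 the ring of bounded real sequences and $o=\{f:\lim_{n\to\infty}nf(n)=0\}$, $\mathbb{R}_{\mathcal F}^{\circ}=\mathbb{R}^{\mathbb{N}}_B/o$ with pointwise operations and order $[x]_o\le_o[y]_o$ iff there exist $z\in o$ and $\bar n$ with $x_n\le y_n+z_n$ for all $n\ge\bar n$. *)

theory Defs
  imports "HOL-Analysis.Analysis" "HOL-Algebra.QuotRing"
begin

definition is_ultrafilter :: "nat filter \<Rightarrow> bool" where
  "is_ultrafilter U \<longleftrightarrow> U \<noteq> bot \<and> (\<forall>P. eventually P U \<or> eventually (\<lambda>n. \<not> P n) U)"

text \<open>U contains the Frechet filter of cofinite sets: U \<le> cofinite (finer filter).
  Nonprincipality follows from this.\<close>

definition seq_ring :: "(nat \<Rightarrow> real) ring" where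
  "seq_ring = \<lparr>carrier = UNIV, monoid.mult = (\<lambda>x y n. x n * y n), one = (\<lambda>n. 1),
               zero = (\<lambda>n. 0), add = (\<lambda>x y n. x n + y n)\<rparr>"

definition bseq_ring :: "(nat \<Rightarrow> real) ring" where
  "bseq_ring = seq_ring\<lparr>carrier := {x. Bseq x}\<rparr>"

definition null_ideal :: "nat filter \<Rightarrow> (nat \<Rightarrow> real) set" where
  "null_ideal G = {x. eventually (\<lambda>n. x n = 0) G}"

definition o_ideal :: "(nat \<Rightarrow> real) set" where
  "o_ideal = {f. Bseq f \<and> (\<lambda>n. real n * f n) \<longlonglongrightarrow> 0}"

definition RF :: "(nat \<Rightarrow> real) set ring" where
  "RF = seq_ring Quot null_ideal cofinite"

definition RU :: "nat filter \<Rightarrow> (nat \<Rightarrow> real) set ring" where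
  "RU U = seq_ring Quot null_ideal U"

definition Ro :: "(nat \<Rightarrow> real) set ring" where
  "Ro = bseq_ring Quot o_ideal"

definition leF :: "(nat \<Rightarrow> real) set \<Rightarrow> (nat \<Rightarrow> real) set \<Rightarrow> bool" where
  "leF r s \<longleftrightarrow> (\<exists>x\<in>r. \<exists>y\<in>s. eventually (\<lambda>n. x n \<le> y n) cofinite)"

definition leU :: "nat filter \<Rightarrow> (nat \<Rightarrow> real) set \<Rightarrow> (nat \<Rightarrow> real) set \<Rightarrow> bool" where
  "leU U r s \<longleftrightarrow> (\<exists>x\<in>r. \<exists>y\<in>s. eventually (\<lambda>n. x n \<le> y n) U)"

definition le_o :: "(nat \<Rightarrow> real) set \<Rightarrow> (nat \<Rightarrow> real) set \<Rightarrow> bool" where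
  "le_o r s \<longleftrightarrow> (\<exists>x\<in>r. \<exists>y\<in>s. \<exists>z\<in>o_ideal. \<exists>N. \<forall>n\<ge>N. x n \<le> y n + z n)"

definition RF_fin :: "(nat \<Rightarrow> real) set ring" where
  "RF_fin = RF\<lparr>carrier := {r \<in> carrier RF. \<exists>m::nat.
      leF (null_ideal cofinite +>\<^bsub>seq_ring\<^esub> (\<lambda>n. - real m)) r \<and>
      leF r (null_ideal cofinite +>\<^bsub>seq_ring\<^esub> (\<lambda>n. real m))}\<rparr>"

definition map_i :: "(nat \<Rightarrow> real) set \<Rightarrow> (nat \<Rightarrow> real) set" where
  "map_i r = (\<Union>x\<in>r. o_ideal +>\<^bsub>bseq_ring\<^esub> x)"

definition map_j :: "nat filter \<Rightarrow> (nat \<Rightarrow> real) set \<Rightarrow> (nat \<Rightarrow> real) set" where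
  "map_j U r = (\<Union>x\<in>r. null_ideal U +>\<^bsub>seq_ring\<^esub> x)"

end

theory Submission
  imports Defs "HOL-Algebra.Subrings"
begin

(* Both maps are instances of one construction: for ideals I \<subseteq> J of a ring R, sending an
   I-class to the J-class of any of its representatives is a well-defined, surjective ring
   homomorphism R/I \<rightarrow> R/J.  For j take R the ring of all real sequences, I the sequences
   vanishing cofinitely and J those vanishing U-almost everywhere; I \<subseteq> J because U refines
   the Frechet filter.  For i, the finite part of *R_F is exactly the quotient of the bounded
   sequences by the cofinitely vanishing ones, and these lie in o.  Order preservation is
   witnessed by the same representatives (with z = 0 for the order of R_F^o). *)

lemma (in ring) ideal_if_closed:
  assumes "I \<subseteq> carrier R" "\<zero> \<in> I"
    and "\<And>a b. a \<in> I \<Longrightarrow> b \<in> I \<Longrightarrow> a \<oplus> b \<in> I"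
    and "\<And>a. a \<in> I \<Longrightarrow> \<ominus> a \<in> I"
    and "\<And>a x. a \<in> I \<Longrightarrow> x \<in> carrier R \<Longrightarrow> x \<otimes> a \<in> I"
    and "\<And>a x. a \<in> I \<Longrightarrow> x \<in> carrier R \<Longrightarrow> a \<otimes> x \<in> I"
  shows "ideal I R"
  using assms by (intro idealI ring_axioms add.subgroupI) auto

lemma (in ring) FactRing_carrier: "carrier (R Quot I) = (\<lambda>x. I +> x) ` carrier R"
  by (auto simp: FactRing_def A_RCOSETS_def')

lemma (in ring) FactRing_coarsen_coset:
  assumes "ideal I R" "ideal J R" "I \<subseteq> J" "x \<in> carrier R"
  shows "(\<Union>y \<in> I +> x. J +> y) = J +> x"
proof -
  interpret I: ideal I R by fact
  interpret J: ideal J R by fact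
  have "J +> y = J +> x" if "y \<in> I +> x" for y
  proof -
    from that assms(3) have "y \<in> J +> x" by (auto simp: a_r_coset_def')
    then show ?thesis using J.a_repr_independence' assms(4) by simp
  qed
  moreover have "x \<in> I +> x" using I.a_rcos_self assms(4) .
  ultimately show ?thesis by blast
qed

lemma (in ring) FactRing_coarsen_repr:
  assumes "ideal I R" "ideal J R" "I \<subseteq> J" "r \<in> carrier (R Quot I)" "x \<in> r"
  shows "(\<Union>y\<in>r. J +> y) = J +> x"
proof -
  interpret I: ideal I R by fact
  obtain a where "a \<in> carrier R" "r = I +> a"
    using assms(4) by (auto simp: FactRing_carrier)
  with assms(5) have "x \<in> carrier R" "r = I +> x"
    using I.a_repr_independence' a_r_coset_subset_G I.a_subset by blast+
  then show ?thesis using FactRing_coarsen_coset assms(1-3) by simp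
qed

lemma (in ring) FactRing_coarsen_ring_hom:
  assumes "ideal I R" "ideal J R" "I \<subseteq> J"
  shows "(\<lambda>r. \<Union>y\<in>r. J +> y) \<in> ring_hom (R Quot I) (R Quot J)"
proof -
  interpret I: ideal I R by fact
  interpret J: ideal J R by fact
  note coarsen = FactRing_coarsen_coset[OF assms]
  show ?thesis
  proof (rule ring_hom_memI)
    fix r assume "r \<in> carrier (R Quot I)"
    then obtain x where "x \<in> carrier R" "r = I +> x" by (auto simp: FactRing_carrier)
    then show "(\<Union>y\<in>r. J +> y) \<in> carrier (R Quot J)" by (simp add: coarsen FactRing_carrier)
  next
    fix r s assume "r \<in> carrier (R Quot I)" "s \<in> carrier (R Quot I)"
    then obtain x y where "x \<in> carrier R" "y \<in> carrier R" "r = I +> x" "s = I +> y"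
      by (auto simp: FactRing_carrier)
    then show "(\<Union>z\<in>r \<otimes>\<^bsub>R Quot I\<^esub> s. J +> z) =
        (\<Union>z\<in>r. J +> z) \<otimes>\<^bsub>R Quot J\<^esub> (\<Union>z\<in>s. J +> z)"
      and "(\<Union>z\<in>r \<oplus>\<^bsub>R Quot I\<^esub> s. J +> z) =
        (\<Union>z\<in>r. J +> z) \<oplus>\<^bsub>R Quot J\<^esub> (\<Union>z\<in>s. J +> z)"
      by (simp_all add: coarsen FactRing_def I.rcoset_mult_add J.rcoset_mult_add
          I.a_rcos_sum J.a_rcos_sum)
  next
    show "(\<Union>y\<in>\<one>\<^bsub>R Quot I\<^esub>. J +> y) = \<one>\<^bsub>R Quot J\<^esub>" by (simp add: coarsen FactRing_def)
  qed
qed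

lemma (in ring) FactRing_coarsen_surj:
  assumes "ideal I R" "ideal J R" "I \<subseteq> J"
  shows "(\<lambda>r. \<Union>y\<in>r. J +> y) ` carrier (R Quot I) = carrier (R Quot J)"
  by (simp add: FactRing_carrier image_image FactRing_coarsen_coset[OF assms] cong: image_cong)

lemma (in ring) FactRing_coarsen_mem:
  assumes "ideal I R" "ideal J R" "r \<in> carrier (R Quot I)" "x \<in> r"
  shows "x \<in> (\<Union>y\<in>r. J +> y)"
proof -
  interpret I: ideal I R by fact
  interpret J: ideal J R by fact
  from assms(3) obtain a where "a \<in> carrier R" "r = I +> a" by (auto simp: FactRing_carrier)
  with assms(4) have "x \<in> carrier R" using a_r_coset_subset_G I.a_subset by blast
  with assms(4) show ?thesis using J.a_rcos_self by blast
qed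

lemma Bseq_plus:
  fixes f g :: "nat \<Rightarrow> real"
  assumes "Bseq f" "Bseq g"
  shows "Bseq (\<lambda>n. f n + g n)"
proof -
  obtain K L where "\<forall>\<^sub>F n in sequentially. norm (f n) \<le> K" "\<forall>\<^sub>F n in sequentially. norm (g n) \<le> L"
    using assms by (auto simp: Bfun_def)
  then have "\<forall>\<^sub>F n in sequentially. norm (f n + g n) \<le> norm (K + L)"
    by eventually_elim auto
  then show ?thesis by (rule Bseq_eventually_mono[OF _ Bfun_const])
qed

lemma Bseq_iff_eventually_bounded_nat:
  fixes x :: "nat \<Rightarrow> real"
  shows "Bseq x \<longleftrightarrow> (\<exists>m::nat. \<forall>\<^sub>F n in sequentially. - real m \<le> x n \<and> x n \<le> real m)"
proof
  assume "Bseq x"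
  then obtain K where "\<forall>\<^sub>F n in sequentially. \<bar>x n\<bar> \<le> K" by (auto simp: Bfun_def)
  then have "\<forall>\<^sub>F n in sequentially. - real (nat \<lceil>K\<rceil>) \<le> x n \<and> x n \<le> real (nat \<lceil>K\<rceil>)"
    by eventually_elim (use real_nat_ceiling_ge[of K] in linarith)
  then show "\<exists>m::nat. \<forall>\<^sub>F n in sequentially. - real m \<le> x n \<and> x n \<le> real m" ..
next
  assume "\<exists>m::nat. \<forall>\<^sub>F n in sequentially. - real m \<le> x n \<and> x n \<le> real m"
  then obtain m :: nat where "\<forall>\<^sub>F n in sequentially. - real m \<le> x n \<and> x n \<le> real m" ..
  then have "\<forall>\<^sub>F n in sequentially. norm (x n) \<le> norm (real m)"
    by eventually_elim auto
  then show "Bseq x" by (rule Bseq_eventually_mono[OF _ Bfun_const])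
qed

lemma seq_ring_simps [simp]:
  "carrier seq_ring = UNIV"
  "x \<otimes>\<^bsub>seq_ring\<^esub> y = (\<lambda>n. x n * y n)"
  "x \<oplus>\<^bsub>seq_ring\<^esub> y = (\<lambda>n. x n + y n)"
  "\<zero>\<^bsub>seq_ring\<^esub> = (\<lambda>n. 0)"
  "\<one>\<^bsub>seq_ring\<^esub> = (\<lambda>n. 1)"
  by (simp_all add: seq_ring_def)

lemma bseq_ring_simps [simp]:
  "carrier bseq_ring = {x. Bseq x}"
  "x \<otimes>\<^bsub>bseq_ring\<^esub> y = (\<lambda>n. x n * y n)"
  "x \<oplus>\<^bsub>bseq_ring\<^esub> y = (\<lambda>n. x n + y n)"
  "\<zero>\<^bsub>bseq_ring\<^esub> = (\<lambda>n. 0)"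
  "\<one>\<^bsub>bseq_ring\<^esub> = (\<lambda>n. 1)"
  by (simp_all add: bseq_ring_def seq_ring_def)

lemma ring_seq_ring: "ring seq_ring"
proof (rule ringI)
  show "abelian_group seq_ring"
  proof (rule abelian_groupI)
    fix x :: "nat \<Rightarrow> real"
    show "\<exists>y\<in>carrier seq_ring. y \<oplus>\<^bsub>seq_ring\<^esub> x = \<zero>\<^bsub>seq_ring\<^esub>"
      by (intro bexI[of _ "\<lambda>n. - x n"]) auto
  qed (auto simp: fun_eq_iff)
  show "monoid seq_ring" by (rule monoidI) (auto simp: fun_eq_iff)
qed (auto simp: fun_eq_iff algebra_simps)

lemma a_inv_seq_ring [simp]: "\<ominus>\<^bsub>seq_ring\<^esub> x = (\<lambda>n. - x n)"
  by (rule abelian_group.minus_equality[OF ring.is_abelian_group[OF ring_seq_ring]]) auto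

lemma subring_Bseq: "subring {x. Bseq x} seq_ring"
  by (rule ring.subringI[OF ring_seq_ring]) (auto simp: Bseq_minus_iff Bseq_mult Bseq_plus)

lemma ring_bseq_ring: "ring bseq_ring"
  unfolding bseq_ring_def by (rule ring.subring_is_ring[OF ring_seq_ring subring_Bseq])

lemma a_inv_bseq_ring: "Bseq x \<Longrightarrow> \<ominus>\<^bsub>bseq_ring\<^esub> x = (\<lambda>n. - x n)"
  by (rule abelian_group.minus_equality[OF ring.is_abelian_group[OF ring_bseq_ring]])
    (auto simp: Bseq_minus_iff)

lemma null_ideal_cofinite_Bseq: "x \<in> null_ideal cofinite \<Longrightarrow> Bseq x"
proof -
  assume "x \<in> null_ideal cofinite"
  then have "\<forall>\<^sub>F n in sequentially. norm (x n) \<le> norm (0::real)"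
    by (auto simp: null_ideal_def cofinite_eq_sequentially elim: eventually_mono)
  then show "Bseq x" by (rule Bseq_eventually_mono[OF _ Bfun_const])
qed

lemma null_ideal_cofinite_subset_o_ideal: "null_ideal cofinite \<subseteq> o_ideal"
proof
  fix x assume x: "x \<in> null_ideal cofinite"
  then have "\<forall>\<^sub>F n in sequentially. real n * x n = 0"
    by (auto simp: null_ideal_def cofinite_eq_sequentially elim: eventually_mono)
  then have "(\<lambda>n. real n * x n) \<longlonglongrightarrow> 0" by (rule tendsto_eventually)
  with x show "x \<in> o_ideal" by (simp add: o_ideal_def null_ideal_cofinite_Bseq)
qed

lemma null_ideal_antimono: "F \<le> G \<Longrightarrow> null_ideal G \<subseteq> null_ideal F"
  by (auto simp: null_ideal_def intro: filter_leD)

lemma ideal_null_ideal_seq_ring: "ideal (null_ideal F) seq_ring"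
  by (rule ring.ideal_if_closed[OF ring_seq_ring])
    (auto simp: null_ideal_def elim: eventually_mono eventually_elim2)

lemma ideal_null_ideal_cofinite_bseq_ring: "ideal (null_ideal cofinite) bseq_ring"
  by (rule ring.ideal_if_closed[OF ring_bseq_ring])
    (auto simp: null_ideal_cofinite_Bseq a_inv_bseq_ring null_ideal_def
      elim: eventually_mono eventually_elim2)

lemma ideal_o_ideal_bseq_ring: "ideal o_ideal bseq_ring"
proof (rule ring.ideal_if_closed[OF ring_bseq_ring])
  fix a b assume "a \<in> o_ideal" "b \<in> o_ideal"
  then show "a \<oplus>\<^bsub>bseq_ring\<^esub> b \<in> o_ideal"
    by (auto simp: o_ideal_def Bseq_plus distrib_left intro: tendsto_add_zero)
next
  fix a assume "a \<in> o_ideal"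
  then show "\<ominus>\<^bsub>bseq_ring\<^esub> a \<in> o_ideal"
    using tendsto_minus[of "\<lambda>n. real n * a n" 0]
    by (simp add: o_ideal_def a_inv_bseq_ring Bseq_minus_iff)
next
  fix a x assume a: "a \<in> o_ideal" and x: "x \<in> carrier bseq_ring"
  then obtain B where "\<forall>\<^sub>F n in sequentially. norm (x n) \<le> B" by (auto simp: Bfun_def)
  with a have "(\<lambda>n. real n * a n * x n) \<longlonglongrightarrow> 0"
    by (intro lim_null_mult_right_bounded[of "\<lambda>n. real n * a n"]) (simp_all add: o_ideal_def)
  then show "x \<otimes>\<^bsub>bseq_ring\<^esub> a \<in> o_ideal" and "a \<otimes>\<^bsub>bseq_ring\<^esub> x \<in> o_ideal"
    using a x by (auto simp: o_ideal_def Bseq_mult ac_simps)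
qed (auto simp: o_ideal_def)

lemma mem_a_r_coset_seq_ring: "y \<in> H +>\<^bsub>seq_ring\<^esub> x \<longleftrightarrow> (\<lambda>n. y n - x n) \<in> H"
proof -
  have "y = (\<lambda>n. h n + x n) \<longleftrightarrow> h = (\<lambda>n. y n - x n)" for h
    by (auto simp: fun_eq_iff)
  then show ?thesis by (auto simp: a_r_coset_def')
qed

lemma a_r_coset_bseq_ring: "H +>\<^bsub>bseq_ring\<^esub> x = H +>\<^bsub>seq_ring\<^esub> x"
  by (simp add: a_r_coset_def r_coset_def bseq_ring_def)

lemma mem_null_ideal_coset: "y \<in> null_ideal F +>\<^bsub>seq_ring\<^esub> x \<longleftrightarrow> (\<forall>\<^sub>F n in F. y n = x n)"
  by (simp add: mem_a_r_coset_seq_ring null_ideal_def)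

lemma leF_cosets:
  "leF (null_ideal cofinite +>\<^bsub>seq_ring\<^esub> x) (null_ideal cofinite +>\<^bsub>seq_ring\<^esub> y) \<longleftrightarrow>
    (\<forall>\<^sub>F n in sequentially. x n \<le> y n)"
proof
  assume "leF (null_ideal cofinite +>\<^bsub>seq_ring\<^esub> x) (null_ideal cofinite +>\<^bsub>seq_ring\<^esub> y)"
  then obtain x' y' where "\<forall>\<^sub>F n in sequentially. x' n = x n" "\<forall>\<^sub>F n in sequentially. y' n = y n"
    "\<forall>\<^sub>F n in sequentially. x' n \<le> y' n"
    by (auto simp: leF_def mem_null_ideal_coset cofinite_eq_sequentially)
  then show "\<forall>\<^sub>F n in sequentially. x n \<le> y n" by eventually_elim simp
next
  assume "\<forall>\<^sub>F n in sequentially. x n \<le> y n"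
  moreover have "x \<in> null_ideal cofinite +>\<^bsub>seq_ring\<^esub> x" "y \<in> null_ideal cofinite +>\<^bsub>seq_ring\<^esub> y"
    by (simp_all add: mem_null_ideal_coset)
  ultimately show "leF (null_ideal cofinite +>\<^bsub>seq_ring\<^esub> x) (null_ideal cofinite +>\<^bsub>seq_ring\<^esub> y)"
    by (auto simp: leF_def cofinite_eq_sequentially)
qed

lemma carrier_RF_fin: "carrier RF_fin = carrier (bseq_ring Quot null_ideal cofinite)"
proof -
  have mem: "null_ideal cofinite +>\<^bsub>seq_ring\<^esub> x \<in> carrier RF_fin \<longleftrightarrow> Bseq x" for x
    by (simp add: RF_fin_def RF_def ring.FactRing_carrier[OF ring_seq_ring] leF_cosets
        Bseq_iff_eventually_bounded_nat eventually_conj_iff)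
  have classes: "carrier RF_fin \<subseteq> range (\<lambda>x. null_ideal cofinite +>\<^bsub>seq_ring\<^esub> x)"
    by (auto simp: RF_fin_def RF_def ring.FactRing_carrier[OF ring_seq_ring])
  show ?thesis
  proof (intro equalityI subsetI)
    fix r assume r: "r \<in> carrier RF_fin"
    with classes obtain x where "r = null_ideal cofinite +>\<^bsub>seq_ring\<^esub> x" by blast
    with r mem show "r \<in> carrier (bseq_ring Quot null_ideal cofinite)"
      by (simp add: ring.FactRing_carrier[OF ring_bseq_ring] a_r_coset_bseq_ring)
  next
    fix r assume "r \<in> carrier (bseq_ring Quot null_ideal cofinite)"
    then obtain x where "Bseq x" "r = null_ideal cofinite +>\<^bsub>seq_ring\<^esub> x"
      by (auto simp: ring.FactRing_carrier[OF ring_bseq_ring] a_r_coset_bseq_ring)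
    with mem show "r \<in> carrier RF_fin" by simp
  qed
qed

lemma RF_fin_eq_FactRing: "RF_fin = bseq_ring Quot null_ideal cofinite"
proof -
  have "rcoset_mult bseq_ring = rcoset_mult seq_ring"
    by (simp add: fun_eq_iff rcoset_mult_def a_r_coset_bseq_ring)
  moreover have "set_add bseq_ring = set_add seq_ring"
    by (simp add: fun_eq_iff set_add_def set_mult_def)
  ultimately have "RF\<lparr>carrier := C\<rparr> = (bseq_ring Quot null_ideal cofinite)\<lparr>carrier := C\<rparr>" for C
    by (simp add: RF_def FactRing_def a_r_coset_bseq_ring)
  moreover have "RF_fin = RF\<lparr>carrier := carrier RF_fin\<rparr>" by (simp add: RF_fin_def)
  ultimately show ?thesis unfolding carrier_RF_fin by simp
qed

lemma map_i_repr: "r \<in> carrier RF_fin \<Longrightarrow> x \<in> r \<Longrightarrow> map_i r = o_ideal +>\<^bsub>bseq_ring\<^esub> x"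
  unfolding map_i_def RF_fin_eq_FactRing
  by (rule ring.FactRing_coarsen_repr[OF ring_bseq_ring ideal_null_ideal_cofinite_bseq_ring
        ideal_o_ideal_bseq_ring null_ideal_cofinite_subset_o_ideal])

lemma map_i_ring_hom: "map_i \<in> ring_hom RF_fin Ro"
  unfolding map_i_def[abs_def] RF_fin_eq_FactRing Ro_def
  by (rule ring.FactRing_coarsen_ring_hom[OF ring_bseq_ring ideal_null_ideal_cofinite_bseq_ring
        ideal_o_ideal_bseq_ring null_ideal_cofinite_subset_o_ideal])

lemma map_i_surj: "map_i ` carrier RF_fin = carrier Ro"
  unfolding map_i_def[abs_def] RF_fin_eq_FactRing Ro_def
  by (rule ring.FactRing_coarsen_surj[OF ring_bseq_ring ideal_null_ideal_cofinite_bseq_ring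
        ideal_o_ideal_bseq_ring null_ideal_cofinite_subset_o_ideal])

lemma map_i_mono:
  assumes "r \<in> carrier RF_fin" "s \<in> carrier RF_fin" "leF r s"
  shows "le_o (map_i r) (map_i s)"
proof -
  obtain x y where "x \<in> r" "y \<in> s" and le: "\<forall>\<^sub>F n in sequentially. x n \<le> y n"
    using assms(3) by (auto simp: leF_def cofinite_eq_sequentially)
  then have "x \<in> map_i r" "y \<in> map_i s"
    using assms(1,2) ring.FactRing_coarsen_mem[OF ring_bseq_ring
        ideal_null_ideal_cofinite_bseq_ring ideal_o_ideal_bseq_ring]
    by (simp_all add: map_i_def RF_fin_eq_FactRing)
  moreover from le obtain N where "\<forall>n\<ge>N. x n \<le> y n + 0" by (auto simp: eventually_sequentially)
  moreover have "(\<lambda>n. 0) \<in> o_ideal" by (simp add: o_ideal_def)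
  ultimately show ?thesis
    unfolding le_o_def by (intro bexI[of _ x] bexI[of _ y] bexI[of _ "\<lambda>n. 0"] exI[of _ N]) simp_all
qed

lemma map_j_repr:
  "U \<le> cofinite \<Longrightarrow> r \<in> carrier RF \<Longrightarrow> x \<in> r \<Longrightarrow> map_j U r = null_ideal U +>\<^bsub>seq_ring\<^esub> x"
  unfolding map_j_def RF_def
  by (rule ring.FactRing_coarsen_repr[OF ring_seq_ring ideal_null_ideal_seq_ring
        ideal_null_ideal_seq_ring null_ideal_antimono])

lemma map_j_ring_hom: "U \<le> cofinite \<Longrightarrow> map_j U \<in> ring_hom RF (RU U)"
  unfolding map_j_def[abs_def] RF_def RU_def
  by (rule ring.FactRing_coarsen_ring_hom[OF ring_seq_ring ideal_null_ideal_seq_ring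
        ideal_null_ideal_seq_ring null_ideal_antimono])

lemma map_j_surj: "U \<le> cofinite \<Longrightarrow> map_j U ` carrier RF = carrier (RU U)"
  unfolding map_j_def[abs_def] RF_def RU_def
  by (rule ring.FactRing_coarsen_surj[OF ring_seq_ring ideal_null_ideal_seq_ring
        ideal_null_ideal_seq_ring null_ideal_antimono])

lemma map_j_mono:
  assumes "U \<le> cofinite" "r \<in> carrier RF" "s \<in> carrier RF" "leF r s"
  shows "leU U (map_j U r) (map_j U s)"
proof -
  obtain x y where "x \<in> r" "y \<in> s" "\<forall>\<^sub>F n in cofinite. x n \<le> y n"
    using assms(4) by (auto simp: leF_def)
  moreover have "x \<in> map_j U r" "y \<in> map_j U s"
    using assms(2,3) \<open>x \<in> r\<close> \<open>y \<in> s\<close> ring.FactRing_coarsen_mem[OF ring_seq_ring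
        ideal_null_ideal_seq_ring ideal_null_ideal_seq_ring]
    by (simp_all add: map_j_def RF_def)
  ultimately show ?thesis using filter_leD[OF assms(1)] by (auto simp: leU_def)
qed

theorem mainTheorem5:
  fixes U :: "nat filter"
  assumes "is_ultrafilter U" and "U \<le> cofinite"
  shows
    \<comment> \<open>well-definedness: i([x]_F) = [x]_o, j([x]_F) = [x]_U, independent of representative\<close>
    "(\<forall>r\<in>carrier RF_fin. \<forall>x\<in>r. map_i r = o_ideal +>\<^bsub>bseq_ring\<^esub> x) \<and>
     (\<forall>r\<in>carrier RF. \<forall>x\<in>r. map_j U r = null_ideal U +>\<^bsub>seq_ring\<^esub> x) \<and>
     map_i \<in> carrier RF_fin \<rightarrow> carrier Ro \<and>
     map_j U \<in> carrier RF \<rightarrow> carrier (RU U) \<and>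
     \<comment> \<open>ring homomorphisms\<close>
     map_i \<in> ring_hom RF_fin Ro \<and>
     map_j U \<in> ring_hom RF (RU U) \<and>
     \<comment> \<open>surjective\<close>
     map_i ` carrier RF_fin = carrier Ro \<and>
     map_j U ` carrier RF = carrier (RU U) \<and>
     \<comment> \<open>order preserving\<close>
     (\<forall>r\<in>carrier RF_fin. \<forall>s\<in>carrier RF_fin. leF r s \<longrightarrow> le_o (map_i r) (map_i s)) \<and>
     (\<forall>r\<in>carrier RF. \<forall>s\<in>carrier RF. leF r s \<longrightarrow> leU U (map_j U r) (map_j U s))"
  using assms(2)
  by (intro conjI ballI impI funcsetI map_i_repr map_j_repr map_i_ring_hom map_j_ring_hom
      ring_hom_closed[OF map_i_ring_hom] ring_hom_closed[OF map_j_ring_hom]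
      map_i_surj map_j_surj map_i_mono map_j_mono)

end
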